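(* Let $\Gamma$ be a group, $\alpha\in\mathrm{Aut}(\Gamma)$ and $\omega(g,h)=\alpha(g)$. Viewing elements $a\in K(\omega)$ as maps $\mathbb Q_2\to\Gamma$ via $a(x):=\alpha^{|u|}(a(u))$ for $x=u00\cdots$, for all $v\in V$, $a\in K(\omega)$ and $x\in\mathbb Q_2$ we have $$\pi(v)(a)(x)=\alpha^{-\log_2(v'(v^{-1}x))}\big(a(v^{-1}x)\big).$$
   Context: $\{0,1\}^*$ denotes the finite words over $\{0,1\}$ (including the empty word), $|u|$ the length; $\mathfrak C=\{0,1\}^{\mathbb N}$; $\mathbb Q_2\subset\mathfrak C$ is the set of eventually-zero sequences $u00\cdots$ ($u\in\{0,1\}^*$). The value $\alpha^{|u|}(a(u))$ does not depend on the choice of $u$ with $x=u00\cdots$, and $a\mapsto(x\mapsto a(x))$ is an isomorphism $K(\omega)\to\prod_{\mathbb Q_2}\Gamma$. A finite complete prefix code is a finite set $\{t_1,\dots,t_n\}\subset\{0,1\}^*$ such that every $x\in\mathfrak C$ has exactly one $t_i$ as prefix. Thompson's group $V$ is the group of homeomorphisms $v$ of $\mathfrak C$ for which there exist finite complete prefix codes $\{t_i\},\{s_i\}$ and a permutation $\sigma$ with $v(t_iw)=s_{\sigma(i)}w$ for all $i$, $w\in\mathfrak C$; for such a representation and $y\in\mathfrak C$ with prefix $t_i$, the slope is $v'(y):=2^{|t_i|-|s_{\sigma(i)}|}$. $K(\omega)$ is the group of maps $a:\{0,1\}^*\to\Gamma$ with $a(u)=\omega(a(u0),a(u1))$, and $V$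 acts on it by $\pi(v)(a)(s_{\sigma(i)}u)=a(t_iu)$ for all $i$, $u\in\{0,1\}^*$ (this determines $\pi(v)(a)\in K(\omega)$ uniquely). *)

theory Defs
  imports "HOL-Analysis.Analysis" "HOL-Algebra.Group"
begin

text \<open>Finite words over {0,1} are bool lists (False = 0, True = 1);
  the Cantor space is nat => bool with the product (of discrete) topology.\<close>

definition conc :: "bool list \<Rightarrow> (nat \<Rightarrow> bool) \<Rightarrow> (nat \<Rightarrow> bool)" where
  "conc u w = (\<lambda>n. if n < length u then u ! n else w (n - length u))"

definition is_prefix_of :: "bool list \<Rightarrow> (nat \<Rightarrow> bool) \<Rightarrow> bool" where
  "is_prefix_of u x \<longleftrightarrow> (\<forall>i < length u. x i = u ! i)"

definition zeros :: "nat \<Rightarrow> bool" where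
  "zeros = (\<lambda>_. False)"

definition Q2 :: "(nat \<Rightarrow> bool) set" where
  "Q2 = {x. \<exists>u. x = conc u zeros}"

definition complete_prefix_code :: "bool list set \<Rightarrow> bool" where
  "complete_prefix_code T \<longleftrightarrow> finite T \<and> (\<forall>x. \<exists>!t. t \<in> T \<and> is_prefix_of t x)"

text \<open>A representation of v: codes T, S and a bijection f : T -> S
  (playing the role of t_i |-> s_sigma(i)).\<close>
definition is_rep :: "((nat \<Rightarrow> bool) \<Rightarrow> (nat \<Rightarrow> bool)) \<Rightarrow> bool list set \<Rightarrow> bool list set
    \<Rightarrow> (bool list \<Rightarrow> bool list) \<Rightarrow> bool" where
  "is_rep v T S f \<longleftrightarrow> complete_prefix_code T \<and> complete_prefix_code S \<and> bij_betw f T S \<and>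
     (\<forall>t\<in>T. \<forall>w. v (conc t w) = conc (f t) w)"

definition thompsonV :: "((nat \<Rightarrow> bool) \<Rightarrow> (nat \<Rightarrow> bool)) set" where
  "thompsonV = {v. (\<exists>w. homeomorphism UNIV UNIV v w) \<and> (\<exists>T S f. is_rep v T S f)}"

definition slope :: "bool list set \<Rightarrow> (bool list \<Rightarrow> bool list) \<Rightarrow> (nat \<Rightarrow> bool) \<Rightarrow> real" where
  "slope T f y = (let t = (THE t. t \<in> T \<and> is_prefix_of t y)
                  in 2 powr (real (length t) - real (length (f t))))"

definition K :: "('g, 'b) monoid_scheme \<Rightarrow> ('g \<Rightarrow> 'g \<Rightarrow> 'g) \<Rightarrow> (bool list \<Rightarrow> 'g) set" where
  "K G \<omega> = {a. (\<forall>u. a u \<in> carrier G) \<and> (\<forall>u. a u = \<omega> (a (u @ [False])) (a (u @ [True])))}"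

definition autpow :: "('g, 'b) monoid_scheme \<Rightarrow> ('g \<Rightarrow> 'g) \<Rightarrow> int \<Rightarrow> 'g \<Rightarrow> 'g" where
  "autpow G \<alpha> k = (if 0 \<le> k then \<alpha> ^^ nat k else (inv_into (carrier G) \<alpha>) ^^ nat (- k))"

definition piV :: "('g, 'b) monoid_scheme \<Rightarrow> ('g \<Rightarrow> 'g \<Rightarrow> 'g) \<Rightarrow> bool list set
    \<Rightarrow> (bool list \<Rightarrow> bool list) \<Rightarrow> (bool list \<Rightarrow> 'g) \<Rightarrow> (bool list \<Rightarrow> 'g)" where
  "piV G \<omega> T f a = (THE b. b \<in> K G \<omega> \<and> (\<forall>t\<in>T. \<forall>u. b (f t @ u) = a (t @ u)))"

definition evalQ :: "('g \<Rightarrow> 'g) \<Rightarrow> (bool list \<Rightarrow> 'g) \<Rightarrow> (nat \<Rightarrow> bool) \<Rightarrow> 'g" where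
  "evalQ \<alpha> a x = (let u = (SOME u. x = conc u zeros) in (\<alpha> ^^ length u) (a u))"

end

theory Submission
  imports Defs
begin

text \<open>With \<omega>(g, h) = \<alpha>(g) the relation defining K(\<omega>) reads a(u) = \<alpha>(a(u0)), hence
  a(u) = \<alpha>^k(a(u0^k)). So \<alpha>^|u|(a(u)) does not depend on trailing zeros of u, and an element of
  K(\<omega>) is determined by, and may be freely prescribed on, the words extending the leaves of a
  complete prefix code; this is what makes \<pi>(v)(a) well defined. If v(t w) = s w and
  x = s r 00..., then v^-1 x = t r 00..., and \<pi>(v)(a)(x) and a(v^-1 x) are \<alpha>^(|s|+|r|) and
  \<alpha>^(|t|+|r|) applied to a(t r). The exponents differ by |s| - |t| = -log2 v'(v^-1 x).\<close>

lemma funpow_closed: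
  assumes "f \<in> A \<rightarrow> A" "x \<in> A"
  shows "(f ^^ n) x \<in> A"
  using assms by (induction n) auto

lemma inv_into_funpow_funpow:
  assumes "bij_betw f A A" "x \<in> A"
  shows "(inv_into A f ^^ n) ((f ^^ n) x) = x"
  using assms(2)
proof (induction n arbitrary: x)
  case (Suc n)
  have "f x \<in> A" using assms(1) Suc.prems by (rule bij_betw_apply)
  then have "(inv_into A f ^^ n) ((f ^^ n) (f x)) = f x" by (rule Suc.IH)
  moreover have "inv_into A f (f x) = x"
    using bij_betw_imp_inj_on[OF assms(1)] Suc.prems by (rule inv_into_f_f)
  ultimately show ?case by (simp add: funpow_swap1)
qed simp

lemma autpow_diff_funpow:
  assumes "bij_betw \<alpha> (carrier G) (carrier G)" "g \<in> carrier G"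
  shows "autpow G \<alpha> (int m - int n) ((\<alpha> ^^ n) g) = (\<alpha> ^^ m) g"
proof (cases "n \<le> m")
  case True
  have "(\<alpha> ^^ (m - n)) ((\<alpha> ^^ n) g) = (\<alpha> ^^ (m - n + n)) g"
    by (simp add: funpow_add)
  with True show ?thesis by (simp add: autpow_def nat_diff_distrib)
next
  case False
  have "(\<alpha> ^^ m) g \<in> carrier G"
    using bij_betw_apply[OF bij_betw_funpow[OF assms(1)] assms(2)] .
  then have "(inv_into (carrier G) \<alpha> ^^ (n - m)) ((\<alpha> ^^ (n - m)) ((\<alpha> ^^ m) g)) = (\<alpha> ^^ m) g"
    by (rule inv_into_funpow_funpow[OF assms(1)])
  moreover have "(\<alpha> ^^ (n - m)) ((\<alpha> ^^ m) g) = (\<alpha> ^^ (n - m + m)) g"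
    by (simp add: funpow_add)
  ultimately show ?thesis using False by (simp add: autpow_def nat_diff_distrib)
qed

lemma conc_append: "conc (s @ r) z = conc s (conc r z)"
  by (rule ext) (auto simp: conc_def nth_append)

lemma conc_append_replicate_False: "conc (u @ replicate k False) zeros = conc u zeros"
  by (rule ext) (auto simp: conc_def zeros_def nth_append)

lemma conc_zeros_eq_imp_extends:
  assumes "conc u zeros = conc u' zeros" "length u \<le> length u'"
  shows "u' = u @ replicate (length u' - length u) False"
proof (rule nth_equalityI)
  fix i assume "i < length u'"
  moreover have "conc u zeros i = conc u' zeros i" using assms(1) by simp
  ultimately show "u' ! i = (u @ replicate (length u' - length u) False) ! i"
    by (auto simp: conc_def zeros_def nth_append split: if_splits)
qed (use assms(2) in simp)

lemma conc_eq_conc_zerosD: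
  assumes "conc s w = conc u zeros"
  shows "w = conc (drop (length s) u) zeros"
proof
  fix n
  have "w n = conc u zeros (n + length s)"
    using fun_cong[OF assms, of "n + length s"] by (simp add: conc_def)
  then show "w n = conc (drop (length s) u) zeros n"
    by (auto simp: conc_def zeros_def add.commute)
qed

lemma is_prefix_of_conc: "is_prefix_of s (conc s w)"
  by (simp add: is_prefix_of_def conc_def)

lemma is_prefix_of_iff_conc: "is_prefix_of s y \<longleftrightarrow> (\<exists>w. y = conc s w)"
proof
  assume "is_prefix_of s y"
  then have "y = conc s (\<lambda>n. y (n + length s))"
    by (auto simp: is_prefix_of_def conc_def)
  then show "\<exists>w. y = conc s w" by blast
qed (auto simp: is_prefix_of_conc)

lemma is_prefix_of_conc_zeros_take:
  assumes "is_prefix_of s (conc w zeros)"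
  shows "take (length s) (w @ replicate (length s) False) = s"
proof (rule nth_equalityI)
  fix i assume "i < length (take (length s) (w @ replicate (length s) False))"
  then have "i < length s" by simp
  moreover from this have "conc w zeros i = s ! i" using assms by (simp add: is_prefix_of_def)
  ultimately show "take (length s) (w @ replicate (length s) False) ! i = s ! i"
    by (auto simp: conc_def zeros_def nth_append)
qed simp

lemma complete_prefix_code_ex:
  "complete_prefix_code S \<Longrightarrow> \<exists>s\<in>S. is_prefix_of s x"
  unfolding complete_prefix_code_def by blast

lemma complete_prefix_code_unique:
  "\<lbrakk>complete_prefix_code S; s \<in> S; s' \<in> S; is_prefix_of s x; is_prefix_of s' x\<rbrakk> \<Longrightarrow> s = s'"
  unfolding complete_prefix_code_def by blast

lemma slope_conc:
  assumes "complete_prefix_code T" "t \<in> T"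
  shows "slope T f (conc t w) = 2 powr (real (length t) - real (length (f t)))"
proof -
  have "(THE t'. t' \<in> T \<and> is_prefix_of t' (conc t w)) = t"
    using assms complete_prefix_code_unique[OF assms(1)] is_prefix_of_conc by blast
  then show ?thesis by (simp add: slope_def)
qed

lemma thompsonV_surj: "v \<in> thompsonV \<Longrightarrow> surj v"
  unfolding thompsonV_def homeomorphism_def by blast

lemma funpow_append_replicate_False:
  assumes "\<And>u. a u = \<alpha> (a (u @ [False]))"
  shows "a u = (\<alpha> ^^ k) (a (u @ replicate k False))"
proof (induction k)
  case (Suc k)
  have "a (u @ replicate k False) = \<alpha> (a ((u @ replicate k False) @ [False]))"
    by (rule assms)
  also have "(u @ replicate k False) @ [False] = u @ replicate (Suc k) False"
    by (simp add: replicate_append_same)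
  finally show ?case using Suc.IH by (simp only: funpow_Suc_right comp_apply)
qed simp

lemma K_carrier: "a \<in> K G \<omega> \<Longrightarrow> a u \<in> carrier G"
  unfolding K_def by blast

lemma K_left_child: "a \<in> K G (\<lambda>g h. \<alpha> g) \<Longrightarrow> a u = \<alpha> (a (u @ [False]))"
  unfolding K_def by blast

lemma K_append_replicate_False:
  "a \<in> K G (\<lambda>g h. \<alpha> g) \<Longrightarrow> a u = (\<alpha> ^^ k) (a (u @ replicate k False))"
  by (rule funpow_append_replicate_False) (rule K_left_child)

lemma K_scaled_value_cong:
  assumes "a \<in> K G (\<lambda>g h. \<alpha> g)" "conc u zeros = conc u' zeros"
  shows "(\<alpha> ^^ length u) (a u) = (\<alpha> ^^ length u') (a u')"
proof -
  have ordered: "(\<alpha> ^^ length u) (a u) = (\<alpha> ^^ length u') (a u')"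
    if "conc u zeros = conc u' zeros" "length u \<le> length u'" for u u'
  proof -
    have "a u = (\<alpha> ^^ (length u' - length u)) (a u')"
      using K_append_replicate_False[OF assms(1)] conc_zeros_eq_imp_extends[OF that] by metis
    also have "(\<alpha> ^^ length u) \<dots> = (\<alpha> ^^ (length u + (length u' - length u))) (a u')"
      by (simp add: funpow_add)
    finally show ?thesis using that(2) by simp
  qed
  show ?thesis
    using ordered[OF assms(2)] ordered[OF assms(2)[symmetric]] by (cases "length u \<le> length u'") auto
qed

lemma evalQ_conc_zeros:
  assumes "a \<in> K G (\<lambda>g h. \<alpha> g)"
  shows "evalQ \<alpha> a (conc u zeros) = (\<alpha> ^^ length u) (a u)"
proof -
  define u0 where "u0 = (SOME u0. conc u zeros = conc u0 zeros)"
  have "conc u zeros = conc u0 zeros"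
    unfolding u0_def by (rule someI[of _ u]) (rule refl)
  then show ?thesis
    unfolding evalQ_def u0_def[symmetric] Let_def by (rule K_scaled_value_cong[OF assms, symmetric])
qed

lemma K_eq_if_eq_on_code:
  assumes S: "complete_prefix_code S"
    and b: "b \<in> K G (\<lambda>g h. \<alpha> g)" and b': "b' \<in> K G (\<lambda>g h. \<alpha> g)"
    and eq: "\<And>s r. s \<in> S \<Longrightarrow> b (s @ r) = b' (s @ r)"
  shows "b = b'"
proof
  fix w
  obtain s where s: "s \<in> S" "is_prefix_of s (conc w zeros)"
    using complete_prefix_code_ex[OF S] by blast
  define n where "n = length s"
  define r where "r = drop n (w @ replicate n False)"
  have w: "w @ replicate n False = s @ r"
    unfolding r_def n_def by (metis append_take_drop_id is_prefix_of_conc_zeros_take[OF s(2)])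
  have "b w = (\<alpha> ^^ n) (b (s @ r))"
    using K_append_replicate_False[OF b] w by metis
  also have "\<dots> = (\<alpha> ^^ n) (b' (s @ r))"
    using eq[OF s(1)] by simp
  also have "\<dots> = b' w"
    using K_append_replicate_False[OF b'] w by metis
  finally show "b w = b' w" .
qed

lemma K_extend_from_code:
  assumes S: "complete_prefix_code S" and \<alpha>: "\<alpha> \<in> carrier G \<rightarrow> carrier G"
    and c_carrier: "\<And>s r. s \<in> S \<Longrightarrow> c s r \<in> carrier G"
    and c_left_child: "\<And>s r. s \<in> S \<Longrightarrow> c s r = \<alpha> (c s (r @ [False]))"
  shows "\<exists>b \<in> K G (\<lambda>g h. \<alpha> g). \<forall>s\<in>S. \<forall>r. b (s @ r) = c s r"
proof -
  define leaf where "leaf w = (THE s. s \<in> S \<and> is_prefix_of s (conc w zeros))" for w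
  have leaf_eq: "leaf w = s" if "s \<in> S" "is_prefix_of s (conc w zeros)" for s w
    unfolding leaf_def using that complete_prefix_code_unique[OF S] by blast
  have leaf: "leaf w \<in> S" for w
    using complete_prefix_code_ex[OF S] leaf_eq by metis
  \<comment> \<open>pad w with zeros until it passes a leaf s, evaluate c there, and climb back up with \<alpha>^|s|\<close>
  define b where "b w = (let s = leaf w; n = length s in
    (\<alpha> ^^ n) (c s (drop n (w @ replicate n False))))" for w
  have "b w = \<alpha> (b (w @ [False]))" for w
  proof -
    define s where "s = leaf w"
    define n where "n = length s"
    define r where "r = drop n (w @ replicate n False)"
    have "leaf (w @ [False]) = s"
      unfolding s_def leaf_def using conc_append_replicate_False[of w 1] by simp
    moreover have "drop n ((w @ [False]) @ replicate n False) = r @ [False]"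
      unfolding r_def by (simp add: replicate_append_same[symmetric])
    ultimately have b_child: "b (w @ [False]) = (\<alpha> ^^ n) (c s (r @ [False]))"
      by (simp add: b_def n_def Let_def)
    have "c s r = \<alpha> (c s (r @ [False]))"
      unfolding s_def by (rule c_left_child[OF leaf])
    then have "b w = (\<alpha> ^^ n) (\<alpha> (c s (r @ [False])))"
      by (simp add: b_def s_def n_def r_def Let_def)
    then show ?thesis
      by (simp add: b_child funpow_swap1)
  qed
  moreover have "b w \<in> carrier G" for w
    unfolding b_def Let_def by (intro funpow_closed[OF \<alpha>] c_carrier leaf)
  ultimately have "b \<in> K G (\<lambda>g h. \<alpha> g)"
    unfolding K_def by blast
  moreover have "b (s @ r) = c s r" if "s \<in> S" for s r
  proof -
    have "leaf (s @ r) = s"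
      using leaf_eq[OF that] is_prefix_of_conc by (simp add: conc_append)
    then have "b (s @ r) = (\<alpha> ^^ length s) (c s (r @ replicate (length s) False))"
      by (simp add: b_def Let_def)
    then show ?thesis
      using funpow_append_replicate_False[of "c s", OF c_left_child[OF that]] by metis
  qed
  ultimately show ?thesis by blast
qed

lemma piV_characterization:
  assumes \<alpha>: "\<alpha> \<in> carrier G \<rightarrow> carrier G" and rep: "is_rep v T S f"
    and a: "a \<in> K G (\<lambda>g h. \<alpha> g)"
  shows "piV G (\<lambda>g h. \<alpha> g) T f a \<in> K G (\<lambda>g h. \<alpha> g) \<and>
    (\<forall>t\<in>T. \<forall>r. piV G (\<lambda>g h. \<alpha> g) T f a (f t @ r) = a (t @ r))"
proof -
  have S: "complete_prefix_code S" and bij: "bij_betw f T S"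
    using rep by (auto simp: is_rep_def)
  have a_child: "a (inv_into T f s @ r) = \<alpha> (a (inv_into T f s @ r @ [False]))" for s r
    using K_left_child[OF a, of "inv_into T f s @ r"] by simp
  have "\<exists>b \<in> K G (\<lambda>g h. \<alpha> g). \<forall>s\<in>S. \<forall>r. b (s @ r) = a (inv_into T f s @ r)"
    by (intro K_extend_from_code[OF S \<alpha>] K_carrier[OF a] a_child)
  then obtain b where b: "b \<in> K G (\<lambda>g h. \<alpha> g)"
    and b_code: "\<And>s r. s \<in> S \<Longrightarrow> b (s @ r) = a (inv_into T f s @ r)"
    by blast
  have b_rep: "\<forall>t\<in>T. \<forall>r. b (f t @ r) = a (t @ r)"
    using b_code bij by (simp add: bij_betw_apply bij_betw_inv_into_left)
  have "b' = b" if "b' \<in> K G (\<lambda>g h. \<alpha> g)" "\<forall>t\<in>T. \<forall>r. b' (f t @ r) = a (t @ r)" for b'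
  proof (rule K_eq_if_eq_on_code[OF S that(1) b])
    fix s r assume "s \<in> S"
    then obtain t where "t \<in> T" "s = f t"
      using bij by (auto simp: bij_betw_def)
    then show "b' (s @ r) = b (s @ r)" using that(2) b_rep by simp
  qed
  with b b_rep have "\<exists>!b. b \<in> K G (\<lambda>g h. \<alpha> g) \<and> (\<forall>t\<in>T. \<forall>r. b (f t @ r) = a (t @ r))"
    by blast
  then show ?thesis
    unfolding piV_def by (rule theI')
qed

lemma is_rep_preimage_Q2:
  assumes "surj v" and rep: "is_rep v T S f" and "x \<in> Q2"
  obtains t r where "t \<in> T" "x = conc (f t @ r) zeros" "inv_into UNIV v x = conc (t @ r) zeros"
proof -
  define y where "y = inv_into UNIV v x"
  have T: "complete_prefix_code T"
    using rep by (simp add: is_rep_def)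
  obtain t where t: "t \<in> T" "is_prefix_of t y"
    using complete_prefix_code_ex[OF T] by blast
  then obtain w where y: "y = conc t w"
    by (auto simp: is_prefix_of_iff_conc)
  have "v y = x"
    using assms(1) by (simp add: y_def f_inv_into_f)
  then have x: "x = conc (f t) w"
    using rep t(1) by (simp add: y is_rep_def)
  moreover obtain u where "x = conc u zeros"
    using assms(3) by (auto simp: Q2_def)
  ultimately obtain r where "w = conc r zeros"
    using conc_eq_conc_zerosD by metis
  then show ?thesis
    using that t(1) x y by (simp add: y_def conc_append)
qed

theorem mainTheorem7:
  fixes G :: "('g, 'b) monoid_scheme" and \<alpha> :: "'g \<Rightarrow> 'g"
    and v :: "(nat \<Rightarrow> bool) \<Rightarrow> (nat \<Rightarrow> bool)"
    and T S :: "bool list set" and f :: "bool list \<Rightarrow> bool list"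
    and a :: "bool list \<Rightarrow> 'g" and x :: "nat \<Rightarrow> bool"
  assumes "group G" and "\<alpha> \<in> iso G G"
    and "v \<in> thompsonV" and "is_rep v T S f"
    and "a \<in> K G (\<lambda>g h. \<alpha> g)" and "x \<in> Q2"
  shows "log 2 (slope T f (inv_into UNIV v x)) \<in> \<int> \<and>
    evalQ \<alpha> (piV G (\<lambda>g h. \<alpha> g) T f a) x
      = autpow G \<alpha> (- \<lfloor>log 2 (slope T f (inv_into UNIV v x))\<rfloor>) (evalQ \<alpha> a (inv_into UNIV v x))"
proof -
  have bij: "bij_betw \<alpha> (carrier G) (carrier G)"
    using assms(2) by (simp add: iso_def)
  obtain t r where t: "t \<in> T" and x: "x = conc (f t @ r) zeros"
    and y: "inv_into UNIV v x = conc (t @ r) zeros"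
    using is_rep_preimage_Q2[OF thompsonV_surj[OF assms(3)] assms(4,6)] .
  have log_slope: "log 2 (slope T f (inv_into UNIV v x)) = of_int (int (length t) - int (length (f t)))"
    using assms(4) t by (simp add: y conc_append slope_conc is_rep_def)
  then have floor_log_slope: "\<lfloor>log 2 (slope T f (inv_into UNIV v x))\<rfloor> = int (length t) - int (length (f t))"
    by (simp only: floor_of_int)
  have "piV G (\<lambda>g h. \<alpha> g) T f a \<in> K G (\<lambda>g h. \<alpha> g)"
    and "piV G (\<lambda>g h. \<alpha> g) T f a (f t @ r) = a (t @ r)"
    using piV_characterization[OF bij_betw_imp_funcset[OF bij] assms(4,5)] t by auto
  then have "evalQ \<alpha> (piV G (\<lambda>g h. \<alpha> g) T f a) x = (\<alpha> ^^ (length (f t) + length r)) (a (t @ r))"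
    by (simp add: x evalQ_conc_zeros)
  moreover have "evalQ \<alpha> a (inv_into UNIV v x) = (\<alpha> ^^ (length t + length r)) (a (t @ r))"
    by (simp add: y evalQ_conc_zeros[OF assms(5)])
  moreover have "autpow G \<alpha> (int (length (f t) + length r) - int (length t + length r))
      ((\<alpha> ^^ (length t + length r)) (a (t @ r))) = (\<alpha> ^^ (length (f t) + length r)) (a (t @ r))"
    using autpow_diff_funpow[OF bij K_carrier[OF assms(5)]] .
  ultimately show ?thesis
    using log_slope floor_log_slope by simp
qed

end
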